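(* In the between-ride routing problem described in the context (with the standing assumptions there), there exists an optimal stationary policy $\mu^*$ such that (i) for every $i\in N$, $\mu^*_1(i)=i$ implies $\mu^*_2(i)=\infty$, and (ii) $\mu^*$ has no cycles with probability 1: for every starting node, every $i\in N$ and all distinct stages $k\neq k'$, $\mathbb{P}(x_k=i,\,x_{k'}=i)=0$. Equivalently, the successor map $i\mapsto \mu^*_1(i)$ on $N$ has no directed cycle through two or more distinct nodes, and every self-loop of it is an indefinite wait. In particular, under $\mu^*$ every node is visited at most once, so the process reaches $m$ within at most $n$ decision stages (counting a final indefinite wait or quit as a stage).
   Context: Road network: a directed, connected graph $G=(N,E)$ with $|N|=n$, containing every loop $(i,i)$, $i\in N$. Constants: wage rate $w>0$ and fuel/vehicle cost per unit distance $f>0$. Each edge $e\in E$ has a ride-request rate $Q_e>0$ and expected ride profit $R_e>0$; each non-loop edge $e=(i,j)$, $j\neq i$, has a traversal time $T_e>0$ and speed $S_e>0$; loops have $S_{(i,i)}=0$. Markov decision problem: the state space is $X=N\cup\{m\}$, where $m$ is an absorbing terminal state (ride found or driver quits) with zero reward. At $i\in N$ an action is a pair $u=(u_1,u_2)$ with $u_1\in\{j:(i,j)\in E\}\cup\{m\}$; if $u_1=i$ (waiting) then $u_2=t\in(0,\infty]$ is freely chosen; if $u_1=j\neq i$ then $u_2=t=T_{(i,j)}$. For $u_1=j\in N$ and $e=(i,j)$: the next state is $m$ with probability $1-e^{-tQ_e}$ and $j$ with probability $e^{-tQ_e}$, and the expected stage reward is $g(i,u)=(1-e^{-tQ_e})\bigl(R_e-\frac{w+fS_e}{Q_e}\bigr)$;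 for $t=\infty$ these quantities are defined as the limits as $t\to\infty$ (so waiting forever at $i$ yields reward $R_{(i,i)}-w/Q_{(i,i)}$ and moves to $m$ with probability 1). For $u_1=m$ (quitting) the next state is $m$ with probability 1 and the reward is $0$. A policy prescribes an action for each state at each stage; it is stationary if the same map $\mu:i\mapsto(\mu_1(i),\mu_2(i))$ is used at every stage. The value of a policy $\pi$ from $x_0$ is $J_\pi(x_0)=\lim_{K\to\infty}\mathbb{E}\bigl[\sum_{k=0}^{K-1} g(x_k,\pi_k(x_k))\bigr]$; a policy is optimal if it attains $J^*(x)=\sup_\pi J_\pi(x)$ for every $x\in N$. $x_k$ denotes the state at stage $k$. Standing assumption: for every non-loop edge $e=(j,k)$, $R_e-\frac{w}{Q_e}\le\max_{i\in\{j,k\}}\bigl\{R_{(i,i)}-\frac{w}{Q_{(i,i)}}\bigr\}$. *)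

theory Defs
  imports "HOL-Analysis.Analysis"
begin

text \<open>Actions at a node i: Quit (move to the terminal state m), or Move j t
  meaning u_1 = j and u_2 = t (t = \<infinity> allowed only for waiting, j = i).\<close>
datatype 'a act = Quit | Move 'a ereal

type_synonym 'a policy = "nat \<Rightarrow> 'a \<Rightarrow> 'a act"

definition admissible :: "('a \<times> 'a) set \<Rightarrow> ('a \<times> 'a \<Rightarrow> real) \<Rightarrow> 'a \<Rightarrow> 'a act \<Rightarrow> bool" where
  "admissible E T i u \<longleftrightarrow>
     (case u of Quit \<Rightarrow> True
      | Move j t \<Rightarrow> (i, j) \<in> E \<and> (if j = i then 0 < t else t = ereal (T (i, j))))"

text \<open>Probability of moving to node u_1 (not to m).\<close>
definition stay_prob :: "('a \<times> 'a \<Rightarrow> real) \<Rightarrow> 'a \<Rightarrow> 'a act \<Rightarrow> real" where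
  "stay_prob Q i u =
     (case u of Quit \<Rightarrow> 0
      | Move j t \<Rightarrow> (case t of ereal r \<Rightarrow> exp (- r * Q (i, j)) | _ \<Rightarrow> 0))"

text \<open>Expected stage reward g(i,u); for t = \<infinity> the limit value.\<close>
definition stage_reward :: "real \<Rightarrow> real \<Rightarrow> ('a \<times> 'a \<Rightarrow> real) \<Rightarrow> ('a \<times> 'a \<Rightarrow> real)
    \<Rightarrow> ('a \<times> 'a \<Rightarrow> real) \<Rightarrow> 'a \<Rightarrow> 'a act \<Rightarrow> real" where
  "stage_reward w f Q R S i u =
     (case u of Quit \<Rightarrow> 0
      | Move j t \<Rightarrow> (case t of
           ereal r \<Rightarrow> (1 - exp (- r * Q (i, j))) * (R (i, j) - (w + f * S (i, j)) / Q (i, j))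
         | _ \<Rightarrow> R (i, j) - (w + f * S (i, j)) / Q (i, j)))"

text \<open>Under a (Markov, deterministic) policy the node sequence is deterministic as
  long as the process has not been absorbed in m; node_seq gives that sequence and
  surv the probability of not yet being in m.\<close>
fun node_seq :: "'a policy \<Rightarrow> 'a \<Rightarrow> nat \<Rightarrow> 'a" where
  "node_seq \<pi> x0 0 = x0"
| "node_seq \<pi> x0 (Suc k) =
     (case \<pi> k (node_seq \<pi> x0 k) of Quit \<Rightarrow> node_seq \<pi> x0 k | Move j t \<Rightarrow> j)"

definition surv :: "('a \<times> 'a \<Rightarrow> real) \<Rightarrow> 'a policy \<Rightarrow> 'a \<Rightarrow> nat \<Rightarrow> real" where
  "surv Q \<pi> x0 k = (\<Prod>l<k. stay_prob Q (node_seq \<pi> x0 l) (\<pi> l (node_seq \<pi> x0 l)))"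

text \<open>P(x_k = i \<and> x_k' = i) for the process started at x0.\<close>
definition joint_prob :: "('a \<times> 'a \<Rightarrow> real) \<Rightarrow> 'a policy \<Rightarrow> 'a \<Rightarrow> 'a \<Rightarrow> nat \<Rightarrow> nat \<Rightarrow> real" where
  "joint_prob Q \<pi> x0 i k k' =
     (if node_seq \<pi> x0 k = i \<and> node_seq \<pi> x0 k' = i then surv Q \<pi> x0 (max k k') else 0)"

text \<open>J_\<pi>(x0) = lim_K E[sum_{k<K} g(x_k, \<pi>_k(x_k))].\<close>
definition policy_value :: "real \<Rightarrow> real \<Rightarrow> ('a \<times> 'a \<Rightarrow> real) \<Rightarrow> ('a \<times> 'a \<Rightarrow> real)
    \<Rightarrow> ('a \<times> 'a \<Rightarrow> real) \<Rightarrow> 'a policy \<Rightarrow> 'a \<Rightarrow> real" where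
  "policy_value w f Q R S \<pi> x0 =
     lim (\<lambda>K. \<Sum>k<K. surv Q \<pi> x0 k *
                 stage_reward w f Q R S (node_seq \<pi> x0 k) (\<pi> k (node_seq \<pi> x0 k)))"

end

theory Submission
  imports Defs
begin

text \<open>Call a stationary policy acyclic if it waits only indefinitely and every move strictly
  increases some potential on the nodes; such a policy reaches the terminal state within |N|
  stages, and there are only finitely many of them. Pick one, \<mu>, maximising the sum of its values
  V over all start nodes; then no change of \<mu> at a single node that keeps it acyclic increases
  the Q-factor at that node. Switching to quitting or to waiting forever gives V i \<ge> 0 and
  V i \<ge> R(i,i) - w/Q(i,i). Since every stage reward is (1 - p) times a net gain, where p is the
  probability of no ride, and a ride found on a road (i,j) has net gain below max (V i) (V j) by the
  standing assumption and f S(i,j) > 0, this forces V to increase along the moves of \<mu>, and then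
  every admissible action has Q-factor at most V: a move to a node of larger value keeps \<mu>
  acyclic with potential V, so it cannot help. Telescoping this Bellman inequality along the path
  of any admissible policy bounds its value by V.\<close>

definition next_node :: "'a \<Rightarrow> 'a act \<Rightarrow> 'a" where
  "next_node i u = (case u of Quit \<Rightarrow> i | Move j t \<Rightarrow> j)"

lemma next_node_simps [simp]: "next_node i Quit = i" "next_node i (Move j t) = j"
  by (simp_all add: next_node_def)

lemma node_seq_Suc_next_node:
  "node_seq \<pi> x (Suc k) = next_node (node_seq \<pi> x k) (\<pi> k (node_seq \<pi> x k))"
  by (simp add: next_node_def split: act.split)

lemma surv_0 [simp]: "surv Q \<pi> x 0 = 1"
  by (simp add: surv_def)

lemma surv_Suc:
  "surv Q \<pi> x (Suc k) = surv Q \<pi> x k * stay_prob Q (node_seq \<pi> x k) (\<pi> k (node_seq \<pi> x k))"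
  by (simp add: surv_def)

lemma stay_prob_nonneg: "0 \<le> stay_prob Q i u"
  by (auto simp: stay_prob_def split: act.split ereal.split)

lemma surv_nonneg: "0 \<le> surv Q \<pi> x k"
  unfolding surv_def by (intro prod_nonneg) (auto intro: stay_prob_nonneg)

lemma surv_eq_0_mono: "surv Q \<pi> x K = 0 \<Longrightarrow> K \<le> K' \<Longrightarrow> surv Q \<pi> x K' = 0"
  unfolding surv_def by auto

lemma stay_prob_neq_0_before:
  "surv Q \<pi> x K \<noteq> 0 \<Longrightarrow> l < K \<Longrightarrow> stay_prob Q (node_seq \<pi> x l) (\<pi> l (node_seq \<pi> x l)) \<noteq> 0"
  unfolding surv_def by auto

lemma node_seq_stationary_Suc:
  "node_seq (\<lambda>_. \<mu>) x (Suc k) = node_seq (\<lambda>_. \<mu>) (next_node x (\<mu> x)) k"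
  by (induction k) (simp_all only: node_seq_Suc_next_node node_seq.simps(1))

lemma surv_stationary_Suc:
  "surv Q (\<lambda>_. \<mu>) x (Suc k) = stay_prob Q x (\<mu> x) * surv Q (\<lambda>_. \<mu>) (next_node x (\<mu> x)) k"
  unfolding surv_def prod.lessThan_Suc_shift node_seq_stationary_Suc by simp

locale reward_model =
  fixes w f :: real and Q R S :: "'a \<times> 'a \<Rightarrow> real"
begin

definition partial_value :: "'a policy \<Rightarrow> 'a \<Rightarrow> nat \<Rightarrow> real" where
  "partial_value \<pi> x K = (\<Sum>k<K. surv Q \<pi> x k *
      stage_reward w f Q R S (node_seq \<pi> x k) (\<pi> k (node_seq \<pi> x k)))"

definition qvalue :: "('a \<Rightarrow> real) \<Rightarrow> 'a \<Rightarrow> 'a act \<Rightarrow> real" where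
  "qvalue V i u = stage_reward w f Q R S i u + stay_prob Q i u * V (next_node i u)"

definition gain :: "'a \<times> 'a \<Rightarrow> real" where
  "gain e = R e - (w + f * S e) / Q e"

definition act_gain :: "'a \<Rightarrow> 'a act \<Rightarrow> real" where
  "act_gain i u = (case u of Quit \<Rightarrow> 0 | Move j t \<Rightarrow> gain (i, j))"

abbreviation J :: "('a \<Rightarrow> 'a act) \<Rightarrow> 'a \<Rightarrow> real" where
  "J \<mu> \<equiv> policy_value w f Q R S (\<lambda>_. \<mu>)"

lemma stage_reward_eq: "stage_reward w f Q R S i u = (1 - stay_prob Q i u) * act_gain i u"
  by (auto simp: stage_reward_def stay_prob_def act_gain_def gain_def split: act.split ereal.split)

lemma qvalue_eq:
  "qvalue V i u = (1 - stay_prob Q i u) * act_gain i u + stay_prob Q i u * V (next_node i u)"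
  by (simp add: qvalue_def stage_reward_eq)

lemma qvalue_Quit [simp]: "qvalue V i Quit = 0"
  by (simp add: qvalue_def stage_reward_def stay_prob_def)

lemma qvalue_Move_infinity [simp]: "qvalue V i (Move j \<infinity>) = gain (i, j)"
  by (simp add: qvalue_eq stay_prob_def act_gain_def)

lemma qvalue_Move_ereal:
  "qvalue V i (Move j (ereal r)) = (1 - exp (- r * Q (i, j))) * gain (i, j) + exp (- r * Q (i, j)) * V j"
  by (simp add: qvalue_eq stay_prob_def act_gain_def)

lemma qvalue_le:
  assumes "act_gain i u \<le> v" "V (next_node i u) \<le> v" "stay_prob Q i u \<le> 1"
  shows "qvalue V i u \<le> v"
  unfolding qvalue_eq by (rule convex_bound_le) (use assms stay_prob_nonneg in auto)

lemma qvalue_mono: "V (next_node i u) \<le> W (next_node i u) \<Longrightarrow> qvalue V i u \<le> qvalue W i u"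
  unfolding qvalue_def by (simp add: mult_left_mono stay_prob_nonneg)

lemma partial_value_Suc:
  "partial_value \<pi> x (Suc K) = partial_value \<pi> x K +
     surv Q \<pi> x K * stage_reward w f Q R S (node_seq \<pi> x K) (\<pi> K (node_seq \<pi> x K))"
  by (simp add: partial_value_def)

lemma partial_value_telescope:
  "partial_value \<pi> x K + surv Q \<pi> x K * W (node_seq \<pi> x K) = W x +
     (\<Sum>k<K. surv Q \<pi> x k * (qvalue W (node_seq \<pi> x k) (\<pi> k (node_seq \<pi> x k)) - W (node_seq \<pi> x k)))"
proof (induction K)
  case 0
  then show ?case by (simp add: partial_value_def)
next
  case (Suc K)
  then show ?case
    unfolding partial_value_Suc surv_Suc node_seq_Suc_next_node[of \<pi> x K] sum.lessThan_Suc qvalue_def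
    by (simp add: algebra_simps del: node_seq.simps)
qed

lemma policy_value_eq_partial_value:
  assumes "surv Q \<pi> x K = 0"
  shows "policy_value w f Q R S \<pi> x = partial_value \<pi> x K"
proof -
  have "partial_value \<pi> x K' = partial_value \<pi> x K" if "K \<le> K'" for K'
    using that
  proof (induction K' rule: dec_induct)
    case (step K')
    have "surv Q \<pi> x K' = 0"
      using surv_eq_0_mono[OF assms step(1)] .
    then show ?case
      using step(3) by (simp only: partial_value_Suc mult_zero_left add_0_right)
  qed (rule refl)
  then have "eventually (\<lambda>K'. partial_value \<pi> x K' = partial_value \<pi> x K) sequentially"
    unfolding eventually_sequentially by blast
  then have "partial_value \<pi> x \<longlonglongrightarrow> partial_value \<pi> x K"
    by (rule tendsto_eventually)
  moreover have "policy_value w f Q R S \<pi> x = lim (partial_value \<pi> x)"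
    unfolding policy_value_def partial_value_def ..
  ultimately show ?thesis
    by (simp add: limI)
qed

lemma partial_value_stationary_Suc:
  "partial_value (\<lambda>_. \<mu>) x (Suc K) = stage_reward w f Q R S x (\<mu> x)
     + stay_prob Q x (\<mu> x) * partial_value (\<lambda>_. \<mu>) (next_node x (\<mu> x)) K"
  unfolding partial_value_def sum.lessThan_Suc_shift surv_stationary_Suc node_seq_stationary_Suc
  by (simp add: sum_distrib_left mult.assoc del: node_seq.simps(2))

lemma stationary_bellman:
  assumes "surv Q (\<lambda>_. \<mu>) (next_node x (\<mu> x)) K = 0"
  shows "J \<mu> x = qvalue (J \<mu>) x (\<mu> x)"
proof -
  have "surv Q (\<lambda>_. \<mu>) x (Suc K) = 0"
    using assms by (simp add: surv_stationary_Suc)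
  then show ?thesis
    using assms by (simp add: policy_value_eq_partial_value partial_value_stationary_Suc qvalue_def)
qed

end


locale routing = reward_model w f Q R S
  for w f :: real and Q R S :: "'a \<times> 'a \<Rightarrow> real" +
  fixes N :: "'a set" and E :: "('a \<times> 'a) set" and T :: "'a \<times> 'a \<Rightarrow> real"
  assumes finite_N: "finite N"
    and E_subset: "E \<subseteq> N \<times> N"
    and loops: "\<forall>i\<in>N. (i, i) \<in> E"
    and f_pos: "f > 0"
    and Q_pos: "\<forall>e\<in>E. Q e > 0"
    and T_pos: "\<forall>(i, j)\<in>E. i \<noteq> j \<longrightarrow> T (i, j) > 0"
    and S_pos: "\<forall>(i, j)\<in>E. i \<noteq> j \<longrightarrow> S (i, j) > 0"
    and S_loop: "\<forall>i\<in>N. S (i, i) = 0"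
    and standing: "\<forall>(j, k)\<in>E. j \<noteq> k \<longrightarrow>
          R (j, k) - w / Q (j, k) \<le> max (R (j, j) - w / Q (j, j)) (R (k, k) - w / Q (k, k))"
begin

definition admissible_policy :: "'a policy \<Rightarrow> bool" where
  "admissible_policy \<pi> \<longleftrightarrow> (\<forall>k. \<forall>i\<in>N. admissible E T i (\<pi> k i))"

lemma admissible_actE:
  assumes "admissible E T i u"
  obtains "u = Quit"
  | t where "u = Move i t" "(i, i) \<in> E" "t > 0"
  | j where "u = Move j (ereal (T (i, j)))" "j \<noteq> i" "(i, j) \<in> E" "T (i, j) > 0"
  using assms T_pos by (cases u) (auto simp: admissible_def split: if_splits)

lemma next_node_in_N: "i \<in> N \<Longrightarrow> admissible E T i u \<Longrightarrow> next_node i u \<in> N"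
  by (erule admissible_actE) (use E_subset in auto)

lemma node_seq_in_N: "admissible_policy \<pi> \<Longrightarrow> x \<in> N \<Longrightarrow> node_seq \<pi> x k \<in> N"
proof (induction k)
  case (Suc k)
  then show ?case
    unfolding node_seq_Suc_next_node by (auto simp: admissible_policy_def intro: next_node_in_N)
qed simp

lemma stay_prob_le_1:
  assumes "admissible E T i u"
  shows "stay_prob Q i u \<le> 1"
  using assms
proof (cases rule: admissible_actE)
  case (2 t)
  then show ?thesis
    using Q_pos by (cases t) (auto simp: stay_prob_def intro!: mult_nonneg_nonneg less_imp_le)
next
  case (3 j)
  then show ?thesis
    using Q_pos by (auto simp: stay_prob_def intro!: mult_nonneg_nonneg less_imp_le)
qed (simp add: stay_prob_def)

definition gain_bound :: real where
  "gain_bound = (\<Sum>e\<in>E. \<bar>gain e\<bar>)"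

lemma abs_act_gain_le:
  assumes "admissible E T i u"
  shows "\<bar>act_gain i u\<bar> \<le> gain_bound"
proof -
  have "finite E"
    using finite_subset[OF E_subset] finite_N by blast
  with assms show ?thesis
    unfolding gain_bound_def
    by (cases rule: admissible_actE) (auto simp: act_gain_def intro: member_le_sum sum_nonneg)
qed

lemma summable_rewards:
  assumes "admissible_policy \<pi>" "x \<in> N"
  shows "summable (\<lambda>k. surv Q \<pi> x k * stage_reward w f Q R S (node_seq \<pi> x k) (\<pi> k (node_seq \<pi> x k)))"
proof -
  let ?u = "\<lambda>k. \<pi> k (node_seq \<pi> x k)"
  have adm: "admissible E T (node_seq \<pi> x k) (?u k)" for k
    using assms node_seq_in_N by (auto simp: admissible_policy_def)
  have "decseq (surv Q \<pi> x)"
    unfolding decseq_Suc_iff surv_Suc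
    by (intro allI mult_left_le stay_prob_le_1 adm surv_nonneg)
  moreover have "\<forall>k. 0 \<le> surv Q \<pi> x k"
    by (simp add: surv_nonneg)
  ultimately obtain L where "surv Q \<pi> x \<longlonglongrightarrow> L"
    by (rule decseq_convergent)
  then have majorant: "summable (\<lambda>k. gain_bound * (surv Q \<pi> x k - surv Q \<pi> x (Suc k)))"
    by (intro summable_mult telescope_summable')
  have bound: "norm (surv Q \<pi> x k * stage_reward w f Q R S (node_seq \<pi> x k) (?u k))
      \<le> gain_bound * (surv Q \<pi> x k - surv Q \<pi> x (Suc k))" for k
  proof -
    let ?p = "stay_prob Q (node_seq \<pi> x k) (?u k)"
    have "norm (surv Q \<pi> x k * stage_reward w f Q R S (node_seq \<pi> x k) (?u k))
        = (surv Q \<pi> x k * (1 - ?p)) * \<bar>act_gain (node_seq \<pi> x k) (?u k)\<bar>"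
      using stay_prob_le_1[OF adm, of k] surv_nonneg[of Q \<pi> x k]
      by (simp add: stage_reward_eq abs_mult)
    also have "\<dots> \<le> (surv Q \<pi> x k * (1 - ?p)) * gain_bound"
      using stay_prob_le_1[OF adm, of k] surv_nonneg[of Q \<pi> x k] abs_act_gain_le[OF adm]
      by (intro mult_left_mono) auto
    finally show ?thesis
      by (simp add: surv_Suc algebra_simps)
  qed
  show ?thesis
    using majorant bound by (rule summable_comparison_test')
qed

lemma policy_value_le:
  assumes "admissible_policy \<pi>" "x \<in> N" "\<And>K. partial_value \<pi> x K \<le> B"
  shows "policy_value w f Q R S \<pi> x \<le> B"
proof -
  note summable = summable_rewards[OF assms(1,2)]
  have "policy_value w f Q R S \<pi> x
      = (\<Sum>k. surv Q \<pi> x k * stage_reward w f Q R S (node_seq \<pi> x k) (\<pi> k (node_seq \<pi> x k)))"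
    unfolding policy_value_def by (rule limI[OF summable_LIMSEQ[OF summable]])
  also have "\<dots> \<le> B"
    using assms(3) unfolding partial_value_def by (intro suminf_le_const[OF summable])
  finally show ?thesis .
qed

lemma policy_value_le_supersolution:
  assumes nonneg: "\<forall>i\<in>N. 0 \<le> V i"
    and super: "\<forall>i\<in>N. \<forall>u. admissible E T i u \<longrightarrow> qvalue V i u \<le> V i"
    and \<pi>: "admissible_policy \<pi>" and x: "x \<in> N"
  shows "policy_value w f Q R S \<pi> x \<le> V x"
proof (rule policy_value_le[OF \<pi> x])
  fix K
  let ?x = "node_seq \<pi> x"
  have "(\<Sum>k<K. surv Q \<pi> x k * (qvalue V (?x k) (\<pi> k (?x k)) - V (?x k))) \<le> 0"
    using super node_seq_in_N[OF \<pi> x] \<pi>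
    by (intro sum_nonpos mult_nonneg_nonpos surv_nonneg) (auto simp: admissible_policy_def)
  moreover have "0 \<le> surv Q \<pi> x K * V (?x K)"
    by (intro mult_nonneg_nonneg surv_nonneg) (use nonneg node_seq_in_N[OF \<pi> x] in auto)
  ultimately show "partial_value \<pi> x K \<le> V x"
    using partial_value_telescope[of \<pi> x K V] by linarith
qed

definition potential :: "('a \<Rightarrow> real) \<Rightarrow> ('a \<Rightarrow> 'a act) \<Rightarrow> bool" where
  "potential \<rho> \<mu> \<longleftrightarrow> (\<forall>i\<in>N. \<forall>j t. \<mu> i = Move j t \<longrightarrow> j \<noteq> i \<longrightarrow> \<rho> i < \<rho> j)"

definition acyclic_policy :: "('a \<Rightarrow> 'a act) \<Rightarrow> bool" where
  "acyclic_policy \<mu> \<longleftrightarrow> (\<forall>i\<in>N. admissible E T i (\<mu> i)) \<and>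
     (\<forall>i\<in>N. \<forall>t. \<mu> i = Move i t \<longrightarrow> t = \<infinity>) \<and> (\<exists>\<rho>. potential \<rho> \<mu>)"

lemma acyclic_policy_admissible: "acyclic_policy \<mu> \<Longrightarrow> admissible_policy (\<lambda>_. \<mu>)"
  by (simp add: acyclic_policy_def admissible_policy_def)

lemma acyclic_policy_fun_upd:
  assumes "acyclic_policy \<mu>" "potential \<rho> \<mu>" "admissible E T i u"
    and "\<forall>t. u = Move i t \<longrightarrow> t = \<infinity>" "\<forall>j t. u = Move j t \<longrightarrow> j \<noteq> i \<longrightarrow> \<rho> i < \<rho> j"
  shows "acyclic_policy (\<mu>(i := u))"
proof -
  have "potential \<rho> (\<mu>(i := u))"
    using assms(2,5) by (auto simp: potential_def)
  then show ?thesis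
    using assms(1,3,4) unfolding acyclic_policy_def by auto
qed

lemma acyclic_policy_moves:
  assumes "acyclic_policy \<mu>" "i \<in> N" "stay_prob Q i (\<mu> i) \<noteq> 0"
  obtains j t where "\<mu> i = Move j t" "j \<noteq> i"
proof (cases "\<mu> i")
  case Quit
  then show ?thesis using assms(3) by (simp add: stay_prob_def)
next
  case (Move j t)
  moreover have "j \<noteq> i"
    using assms Move by (auto simp: acyclic_policy_def stay_prob_def)
  ultimately show ?thesis by (rule that)
qed

lemma acyclic_path_strict_mono:
  assumes \<mu>: "acyclic_policy \<mu>" and \<rho>: "potential \<rho> \<mu>" and x: "x \<in> N"
    and alive: "surv Q (\<lambda>_. \<mu>) x K \<noteq> 0"
  shows "strict_mono_on {..K} (\<lambda>k. \<rho> (node_seq (\<lambda>_. \<mu>) x k))"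
proof -
  let ?x = "node_seq (\<lambda>_. \<mu>) x"
  have step: "\<rho> (?x l) < \<rho> (?x (Suc l))" if l: "l < K" for l
  proof -
    have "?x l \<in> N"
      using node_seq_in_N[OF acyclic_policy_admissible[OF \<mu>] x] .
    moreover obtain j t where "\<mu> (?x l) = Move j t" "j \<noteq> ?x l"
      using acyclic_policy_moves[OF \<mu> calculation] stay_prob_neq_0_before[OF alive l] by auto
    ultimately show ?thesis
      using \<rho> unfolding potential_def node_seq_Suc_next_node by auto
  qed
  have "\<rho> (?x a) < \<rho> (?x b)" if "a < b" "b \<le> K" for a b
    using that
  proof (induction b)
    case (Suc b)
    then show ?case
      using step[of b] by (cases "a = b") (auto intro: less_trans)
  qed simp
  then show ?thesis
    by (auto intro: strict_mono_onI)
qed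

lemma acyclic_inj_on_path:
  assumes "acyclic_policy \<mu>" "x \<in> N" "surv Q (\<lambda>_. \<mu>) x K \<noteq> 0"
  shows "inj_on (node_seq (\<lambda>_. \<mu>) x) {..K}"
proof -
  obtain \<rho> where "potential \<rho> \<mu>"
    using assms(1) by (auto simp: acyclic_policy_def)
  then have "inj_on (\<lambda>k. \<rho> (node_seq (\<lambda>_. \<mu>) x k)) {..K}"
    using acyclic_path_strict_mono assms by (blast intro: strict_mono_on_imp_inj_on)
  then show ?thesis
    by (intro inj_on_imageI2[of \<rho>]) (simp add: comp_def)
qed

lemma acyclic_surv_card_eq_0:
  assumes "acyclic_policy \<mu>" "x \<in> N"
  shows "surv Q (\<lambda>_. \<mu>) x (card N) = 0"
proof (rule ccontr)
  assume "surv Q (\<lambda>_. \<mu>) x (card N) \<noteq> 0"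
  then have "inj_on (node_seq (\<lambda>_. \<mu>) x) {..card N}"
    using acyclic_inj_on_path assms by blast
  moreover have "node_seq (\<lambda>_. \<mu>) x ` {..card N} \<subseteq> N"
    using node_seq_in_N[OF acyclic_policy_admissible] assms by blast
  ultimately have "card {..card N} \<le> card N"
    using card_inj_on_le finite_N by blast
  then show False
    by simp
qed

lemma acyclic_joint_prob_eq_0:
  assumes "acyclic_policy \<mu>" "x \<in> N" "k \<noteq> k'"
  shows "joint_prob Q (\<lambda>_. \<mu>) x i k k' = 0"
proof (rule ccontr)
  assume nonzero: "joint_prob Q (\<lambda>_. \<mu>) x i k k' \<noteq> 0"
  then have same: "node_seq (\<lambda>_. \<mu>) x k = node_seq (\<lambda>_. \<mu>) x k'"
    and alive: "surv Q (\<lambda>_. \<mu>) x (max k k') \<noteq> 0"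
    by (auto simp: joint_prob_def split: if_splits)
  have "k = k'"
    using inj_onD[OF acyclic_inj_on_path[OF assms(1,2) alive] same] by simp
  then show False
    using assms(3) by contradiction
qed

lemma acyclic_bellman:
  assumes "acyclic_policy \<mu>" "x \<in> N"
  shows "J \<mu> x = qvalue (J \<mu>) x (\<mu> x)"
proof (rule stationary_bellman)
  have "next_node x (\<mu> x) \<in> N"
    using assms next_node_in_N by (auto simp: acyclic_policy_def)
  then show "surv Q (\<lambda>_. \<mu>) (next_node x (\<mu> x)) (card N) = 0"
    using acyclic_surv_card_eq_0[OF assms(1)] by blast
qed

lemma acyclic_value_ge_subsolution:
  assumes \<mu>: "acyclic_policy \<mu>" and sub: "\<forall>i\<in>N. W i \<le> qvalue W i (\<mu> i)" and x: "x \<in> N"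
  shows "W x \<le> J \<mu> x"
proof -
  let ?x = "node_seq (\<lambda>_. \<mu>) x"
  have "0 \<le> (\<Sum>k<card N. surv Q (\<lambda>_. \<mu>) x k * (qvalue W (?x k) (\<mu> (?x k)) - W (?x k)))"
    using sub node_seq_in_N[OF acyclic_policy_admissible[OF \<mu>] x]
    by (intro sum_nonneg mult_nonneg_nonneg surv_nonneg) auto
  then show ?thesis
    using partial_value_telescope[of "\<lambda>_. \<mu>" x "card N" W] acyclic_surv_card_eq_0[OF \<mu> x]
      policy_value_eq_partial_value[OF acyclic_surv_card_eq_0[OF \<mu> x]]
    by simp
qed

lemma acyclic_switch_improves:
  assumes \<mu>: "acyclic_policy \<mu>" and \<mu>': "acyclic_policy (\<mu>(i := u))" and i: "i \<in> N"
    and better: "J \<mu> i < qvalue (J \<mu>) i u"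
  shows "\<forall>x\<in>N. J \<mu> x \<le> J (\<mu>(i := u)) x" and "J \<mu> i < J (\<mu>(i := u)) i"
proof -
  have "\<forall>x\<in>N. J \<mu> x \<le> qvalue (J \<mu>) x ((\<mu>(i := u)) x)"
    using acyclic_bellman[OF \<mu>] better by (auto intro: less_imp_le)
  then show ge: "\<forall>x\<in>N. J \<mu> x \<le> J (\<mu>(i := u)) x"
    using acyclic_value_ge_subsolution[OF \<mu>'] by blast
  have "next_node i u \<in> N"
    using \<mu>' i next_node_in_N unfolding acyclic_policy_def by (metis fun_upd_same)
  then have "qvalue (J \<mu>) i u \<le> qvalue (J (\<mu>(i := u))) i u"
    using ge by (intro qvalue_mono) blast
  also have "\<dots> = J (\<mu>(i := u)) i"
    using acyclic_bellman[OF \<mu>' i] by simp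
  finally show "J \<mu> i < J (\<mu>(i := u)) i"
    using better by simp
qed

lemma finite_acyclic_policies: "finite {\<mu>. acyclic_policy \<mu> \<and> (\<forall>x. x \<notin> N \<longrightarrow> \<mu> x = Quit)}"
proof -
  define B where "B = insert Quit ((\<lambda>j. Move j \<infinity>) ` N \<union> (\<lambda>(i, j). Move j (ereal (T (i, j)))) ` E)"
  have "finite B"
    using finite_N finite_subset[OF E_subset] by (simp add: B_def)
  moreover have "\<mu> i \<in> B" if "acyclic_policy \<mu>" "i \<in> N" for \<mu> i
  proof -
    have "admissible E T i (\<mu> i)"
      using that by (simp add: acyclic_policy_def)
    then show ?thesis
      by (cases rule: admissible_actE) (use that in \<open>auto simp: acyclic_policy_def B_def\<close>)
  qed
  ultimately show ?thesis
    by (intro finite_subset[OF _ finite_set_of_finite_funs[OF finite_N \<open>finite B\<close>, of Quit]]) auto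
qed

definition switch_optimal :: "('a \<Rightarrow> 'a act) \<Rightarrow> bool" where
  "switch_optimal \<mu> \<longleftrightarrow> acyclic_policy \<mu> \<and>
     (\<forall>i\<in>N. \<forall>u. acyclic_policy (\<mu>(i := u)) \<longrightarrow> qvalue (J \<mu>) i u \<le> J \<mu> i)"

lemma switch_optimal_exists: "\<exists>\<mu>. switch_optimal \<mu>"
proof -
  let ?P = "{\<mu>. acyclic_policy \<mu> \<and> (\<forall>x. x \<notin> N \<longrightarrow> \<mu> x = Quit)}"
  define \<Phi> where "\<Phi> \<mu> = (\<Sum>i\<in>N. J \<mu> i)" for \<mu>
  have "(\<lambda>_. Quit) \<in> ?P"
    by (simp add: acyclic_policy_def admissible_def potential_def)
  then have "Max (\<Phi> ` ?P) \<in> \<Phi> ` ?P"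
    using finite_acyclic_policies by (intro Max_in) auto
  then obtain \<mu> where \<mu>: "\<mu> \<in> ?P" and \<mu>_max: "\<Phi> \<mu> = Max (\<Phi> ` ?P)"
    by auto
  have max: "\<Phi> \<mu>' \<le> \<Phi> \<mu>" if "\<mu>' \<in> ?P" for \<mu>'
    unfolding \<mu>_max by (intro Max_ge finite_imageI finite_acyclic_policies imageI that)
  have "qvalue (J \<mu>) i u \<le> J \<mu> i" if i: "i \<in> N" and \<mu>': "acyclic_policy (\<mu>(i := u))" for i u
  proof (rule ccontr)
    assume "\<not> qvalue (J \<mu>) i u \<le> J \<mu> i"
    then have "\<forall>x\<in>N. J \<mu> x \<le> J (\<mu>(i := u)) x" "J \<mu> i < J (\<mu>(i := u)) i"
      using acyclic_switch_improves[OF _ \<mu>' i] \<mu> by auto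
    then have "\<Phi> \<mu> < \<Phi> (\<mu>(i := u))"
      unfolding \<Phi>_def using i by (intro sum_strict_mono_ex1[OF finite_N]) auto
    moreover have "\<mu>(i := u) \<in> ?P"
      using \<mu> \<mu>' i by auto
    ultimately show False
      using max by (meson not_le)
  qed
  then show ?thesis
    using \<mu> unfolding switch_optimal_def by blast
qed

lemma switch_optimal_lower_bounds:
  assumes opt: "switch_optimal \<mu>" and i: "i \<in> N"
  shows "0 \<le> J \<mu> i" and "gain (i, i) \<le> J \<mu> i"
proof -
  have \<mu>: "acyclic_policy \<mu>"
    using opt by (simp add: switch_optimal_def)
  then obtain \<rho> where \<rho>: "potential \<rho> \<mu>"
    by (auto simp: acyclic_policy_def)
  have "acyclic_policy (\<mu>(i := Quit))"
    by (rule acyclic_policy_fun_upd[OF \<mu> \<rho>]) (auto simp: admissible_def)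
  then have "qvalue (J \<mu>) i Quit \<le> J \<mu> i"
    using opt i unfolding switch_optimal_def by blast
  then show "0 \<le> J \<mu> i"
    by simp
  have "acyclic_policy (\<mu>(i := Move i \<infinity>))"
    by (rule acyclic_policy_fun_upd[OF \<mu> \<rho>]) (use loops i in \<open>auto simp: admissible_def\<close>)
  then have "qvalue (J \<mu>) i (Move i \<infinity>) \<le> J \<mu> i"
    using opt i unfolding switch_optimal_def by blast
  then show "gain (i, i) \<le> J \<mu> i"
    by simp
qed

lemma gain_lt_max:
  assumes loop_gain: "\<forall>i\<in>N. gain (i, i) \<le> V i" and ij: "(i, j) \<in> E" "j \<noteq> i"
  shows "gain (i, j) < max (V i) (V j)"
proof -
  have "i \<in> N" "j \<in> N"
    using ij E_subset by auto
  then have "max (R (i, i) - w / Q (i, i)) (R (j, j) - w / Q (j, j)) \<le> max (V i) (V j)"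
    using loop_gain S_loop by (auto simp: gain_def)
  moreover have "R (i, j) - w / Q (i, j) \<le> max (R (i, i) - w / Q (i, i)) (R (j, j) - w / Q (j, j))"
    using standing ij by auto
  moreover have "0 < f * S (i, j) / Q (i, j)"
    using f_pos S_pos Q_pos ij by auto
  moreover have "gain (i, j) = R (i, j) - w / Q (i, j) - f * S (i, j) / Q (i, j)"
    by (simp add: gain_def add_divide_distrib)
  ultimately show ?thesis
    by linarith
qed

lemma switch_optimal_potential:
  assumes opt: "switch_optimal \<mu>"
  shows "potential (J \<mu>) \<mu>"
  unfolding potential_def
proof (intro ballI allI impI)
  fix i j t
  assume i: "i \<in> N" and move: "\<mu> i = Move j t" and ji: "j \<noteq> i"
  have \<mu>: "acyclic_policy \<mu>"
    using opt by (simp add: switch_optimal_def)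
  then have ij: "(i, j) \<in> E" and t: "t = ereal (T (i, j))"
    using i move ji by (auto simp: acyclic_policy_def admissible_def)
  define e where "e = exp (- T (i, j) * Q (i, j))"
  have e: "0 < e" "e < 1"
    using Q_pos T_pos ij ji by (auto simp: e_def)
  have bellman: "J \<mu> i = (1 - e) * gain (i, j) + e * J \<mu> j"
    using acyclic_bellman[OF \<mu> i] move t by (simp add: qvalue_Move_ereal e_def)
  have gain: "gain (i, j) < max (J \<mu> i) (J \<mu> j)"
    using gain_lt_max switch_optimal_lower_bounds(2)[OF opt] ij ji by blast
  show "J \<mu> i < J \<mu> j"
  proof (rule ccontr)
    assume "\<not> J \<mu> i < J \<mu> j"
    then have "(1 - e) * gain (i, j) + e * J \<mu> j < (1 - e) * J \<mu> i + e * J \<mu> i"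
      using gain e by (intro add_less_le_mono mult_strict_left_mono mult_left_mono) auto
    then show False
      by (simp add: bellman algebra_simps)
  qed
qed

lemma switch_optimal_supersolution:
  assumes opt: "switch_optimal \<mu>" and i: "i \<in> N" and u: "admissible E T i u"
  shows "qvalue (J \<mu>) i u \<le> J \<mu> i"
  using u
proof (cases rule: admissible_actE)
  case 1
  then show ?thesis
    using switch_optimal_lower_bounds(1)[OF opt i] by simp
next
  case (2 t)
  then show ?thesis
    using switch_optimal_lower_bounds(2)[OF opt i] stay_prob_le_1[OF u]
    by (intro qvalue_le) (auto simp: act_gain_def)
next
  case (3 j)
  show ?thesis
  proof (cases "J \<mu> j \<le> J \<mu> i")
    case True
    have "gain (i, j) < max (J \<mu> i) (J \<mu> j)"
      using gain_lt_max switch_optimal_lower_bounds(2)[OF opt] 3 by blast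
    then show ?thesis
      using 3 True stay_prob_le_1[OF u] by (intro qvalue_le) (auto simp: act_gain_def)
  next
    case False
    have "acyclic_policy (\<mu>(i := u))"
      using opt switch_optimal_potential[OF opt] u 3 False
      by (intro acyclic_policy_fun_upd) (auto simp: switch_optimal_def)
    then show ?thesis
      using opt i by (simp add: switch_optimal_def)
  qed
qed

end

theorem proposition2:
  fixes N :: "'a set" and E :: "('a \<times> 'a) set"
    and w f :: real and Q R T S :: "'a \<times> 'a \<Rightarrow> real"
  assumes finN: "finite N"
    and E_sub: "E \<subseteq> N \<times> N"
    and loops: "\<forall>i\<in>N. (i, i) \<in> E"
    and connected: "\<forall>i\<in>N. \<forall>j\<in>N. (i, j) \<in> (E \<union> E\<inverse>)\<^sup>*"
    and w_pos: "w > 0" and f_pos: "f > 0"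
    and Q_pos: "\<forall>e\<in>E. Q e > 0" and R_pos: "\<forall>e\<in>E. R e > 0"
    and T_pos: "\<forall>(i, j)\<in>E. i \<noteq> j \<longrightarrow> T (i, j) > 0"
    and S_pos: "\<forall>(i, j)\<in>E. i \<noteq> j \<longrightarrow> S (i, j) > 0"
    and S_loop: "\<forall>i\<in>N. S (i, i) = 0"
    and standing: "\<forall>(j, k)\<in>E. j \<noteq> k \<longrightarrow>
          R (j, k) - w / Q (j, k) \<le> max (R (j, j) - w / Q (j, j)) (R (k, k) - w / Q (k, k))"
  shows "\<exists>\<mu> :: 'a \<Rightarrow> 'a act.
     (\<forall>i\<in>N. admissible E T i (\<mu> i)) \<and>
     (\<forall>\<pi>. (\<forall>k. \<forall>i\<in>N. admissible E T i (\<pi> k i)) \<longrightarrow>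
          (\<forall>x\<in>N. policy_value w f Q R S \<pi> x \<le> policy_value w f Q R S (\<lambda>_. \<mu>) x)) \<and>
     (\<forall>i\<in>N. \<forall>t. \<mu> i = Move i t \<longrightarrow> t = \<infinity>) \<and>
     (\<forall>x0\<in>N. \<forall>i\<in>N. \<forall>k k'. k \<noteq> k' \<longrightarrow> joint_prob Q (\<lambda>_. \<mu>) x0 i k k' = 0) \<and>
     (\<forall>x0\<in>N. surv Q (\<lambda>_. \<mu>) x0 (card N) = 0)"
proof -
  interpret routing w f Q R S N E T
    using assms by unfold_locales auto
  obtain \<mu> where opt: "switch_optimal \<mu>"
    using switch_optimal_exists by blast
  then have \<mu>: "acyclic_policy \<mu>"
    by (simp add: switch_optimal_def)
  have "policy_value w f Q R S \<pi> x \<le> J \<mu> x" if "admissible_policy \<pi>" "x \<in> N" for \<pi> x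
    using switch_optimal_lower_bounds(1)[OF opt] switch_optimal_supersolution[OF opt] that
    by (intro policy_value_le_supersolution) auto
  then show ?thesis
    using \<mu> acyclic_joint_prob_eq_0 acyclic_surv_card_eq_0
    unfolding acyclic_policy_def admissible_policy_def by blast
qed

end
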